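(* Let $(G,\sigma)$ be a planar, color-connected colored graph with a fixed plane embedding and vertices $s,t$ connected in $G$. If $S$ is an inclusion-minimal $s$-$t$ color separator, then the vertices of the color-intersection graph $\mathcal{G}$ corresponding to the colors in $S$ induce a connected subgraph of $\mathcal{G}$.
   Context: $\sigma:V\to 2^{[m]}$; color-connected means for each color $c$ the vertices whose color set contains $c$ induce a connected subgraph. $V(C)=\{v:\sigma(v)\cap C\ne\emptyset\}$; $S\subseteq[m]$ is an $s$-$t$ color separator if $s,t$ are disconnected in $G-V(S)$. For a face $f$ of $G$, $\sigma(f)$ is the union of $\sigma(u)\cup\sigma(v)$ over boundary edges $uv$ of $f$. The color-intersection graph $\mathcal{G}$ has a vertex $c_i$ per color $i\in[m]$ and an edge $c_ic_j$ whenever some face $f$ satisfies $\{i,j\}\subseteq\sigma(f)$. *)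

theory Defs
  imports "HOL-Analysis.Analysis"
begin

definition simple_graph :: "'v set \<Rightarrow> 'v set set \<Rightarrow> bool" where
  "simple_graph V E \<longleftrightarrow> finite V \<and> (\<forall>e\<in>E. \<exists>u v. u \<in> V \<and> v \<in> V \<and> u \<noteq> v \<and> e = {u, v})"

definition conn_in :: "'v set set \<Rightarrow> 'v set \<Rightarrow> 'v \<Rightarrow> 'v \<Rightarrow> bool" where
  "conn_in E A u v \<longleftrightarrow> u \<in> A \<and> v \<in> A \<and>
     (u, v) \<in> {(x, y). {x, y} \<in> E \<and> x \<in> A \<and> y \<in> A}\<^sup>*"

definition induces_connected :: "'v set set \<Rightarrow> 'v set \<Rightarrow> bool" where
  "induces_connected E A \<longleftrightarrow> (\<forall>u\<in>A. \<forall>v\<in>A. conn_in E A u v)"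

definition coloring :: "'v set \<Rightarrow> nat \<Rightarrow> ('v \<Rightarrow> nat set) \<Rightarrow> bool" where
  "coloring V m \<sigma> \<longleftrightarrow> (\<forall>v\<in>V. \<sigma> v \<subseteq> {1..m})"

definition color_connected :: "'v set \<Rightarrow> 'v set set \<Rightarrow> nat \<Rightarrow> ('v \<Rightarrow> nat set) \<Rightarrow> bool" where
  "color_connected V E m \<sigma> \<longleftrightarrow> (\<forall>c\<in>{1..m}. induces_connected E {v\<in>V. c \<in> \<sigma> v})"

definition verts_of_colors :: "'v set \<Rightarrow> ('v \<Rightarrow> nat set) \<Rightarrow> nat set \<Rightarrow> 'v set" where
  "verts_of_colors V \<sigma> C = {v\<in>V. \<sigma> v \<inter> C \<noteq> {}}"

definition color_separator ::
    "'v set \<Rightarrow> 'v set set \<Rightarrow> nat \<Rightarrow> ('v \<Rightarrow> nat set) \<Rightarrow> 'v \<Rightarrow> 'v \<Rightarrow> nat set \<Rightarrow> bool" where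
  "color_separator V E m \<sigma> s t S \<longleftrightarrow> S \<subseteq> {1..m} \<and>
     \<not> conn_in E (V - verts_of_colors V \<sigma> S) s t"

definition minimal_color_separator ::
    "'v set \<Rightarrow> 'v set set \<Rightarrow> nat \<Rightarrow> ('v \<Rightarrow> nat set) \<Rightarrow> 'v \<Rightarrow> 'v \<Rightarrow> nat set \<Rightarrow> bool" where
  "minimal_color_separator V E m \<sigma> s t S \<longleftrightarrow> color_separator V E m \<sigma> s t S \<and>
     (\<forall>S'. S' \<subset> S \<longrightarrow> \<not> color_separator V E m \<sigma> s t S')"

definition plane_embedding ::
    "'v set \<Rightarrow> 'v set set \<Rightarrow> ('v \<Rightarrow> complex) \<Rightarrow> ('v set \<Rightarrow> real \<Rightarrow> complex) \<Rightarrow> bool" where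
  "plane_embedding V E pos \<gamma> \<longleftrightarrow> inj_on pos V \<and>
     (\<forall>e\<in>E. arc (\<gamma> e) \<and>
        (\<exists>u v. e = {u, v} \<and> pathstart (\<gamma> e) = pos u \<and> pathfinish (\<gamma> e) = pos v) \<and>
        path_image (\<gamma> e) \<inter> pos ` V = pos ` e) \<and>
     (\<forall>e\<in>E. \<forall>e'\<in>E. e \<noteq> e' \<longrightarrow> path_image (\<gamma> e) \<inter> path_image (\<gamma> e') \<subseteq> pos ` (e \<inter> e'))"

definition drawing :: "'v set \<Rightarrow> 'v set set \<Rightarrow> ('v \<Rightarrow> complex) \<Rightarrow> ('v set \<Rightarrow> real \<Rightarrow> complex) \<Rightarrow> complex set" where
  "drawing V E pos \<gamma> = pos ` V \<union> (\<Union>e\<in>E. path_image (\<gamma> e))"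

definition faces :: "'v set \<Rightarrow> 'v set set \<Rightarrow> ('v \<Rightarrow> complex) \<Rightarrow> ('v set \<Rightarrow> real \<Rightarrow> complex) \<Rightarrow> complex set set" where
  "faces V E pos \<gamma> = components (UNIV - drawing V E pos \<gamma>)"

definition boundary_edges :: "'v set set \<Rightarrow> ('v set \<Rightarrow> real \<Rightarrow> complex) \<Rightarrow> complex set \<Rightarrow> 'v set set" where
  "boundary_edges E \<gamma> f = {e\<in>E. path_image (\<gamma> e) \<subseteq> frontier f}"

definition face_colors :: "'v set set \<Rightarrow> ('v set \<Rightarrow> real \<Rightarrow> complex) \<Rightarrow> ('v \<Rightarrow> nat set) \<Rightarrow> complex set \<Rightarrow> nat set" where
  "face_colors E \<gamma> \<sigma> f = (\<Union>e\<in>boundary_edges E \<gamma> f. \<Union>v\<in>e. \<sigma> v)"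

definition cig_edge ::
    "'v set \<Rightarrow> 'v set set \<Rightarrow> nat \<Rightarrow> ('v \<Rightarrow> complex) \<Rightarrow> ('v set \<Rightarrow> real \<Rightarrow> complex) \<Rightarrow> ('v \<Rightarrow> nat set) \<Rightarrow> nat \<Rightarrow> nat \<Rightarrow> bool" where
  "cig_edge V E m pos \<gamma> \<sigma> i j \<longleftrightarrow> i \<in> {1..m} \<and> j \<in> {1..m} \<and> i \<noteq> j \<and>
     (\<exists>f\<in>faces V E pos \<gamma>. {i, j} \<subseteq> face_colors E \<gamma> \<sigma> f)"

definition cig_induces_connected ::
    "'v set \<Rightarrow> 'v set set \<Rightarrow> nat \<Rightarrow> ('v \<Rightarrow> complex) \<Rightarrow> ('v set \<Rightarrow> real \<Rightarrow> complex) \<Rightarrow> ('v \<Rightarrow> nat set) \<Rightarrow> nat set \<Rightarrow> bool" where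
  "cig_induces_connected V E m pos \<gamma> \<sigma> C \<longleftrightarrow>
     (\<forall>i\<in>C. \<forall>j\<in>C. (i, j) \<in> {(a, b). cig_edge V E m pos \<gamma> \<sigma> a b \<and> a \<in> C \<and> b \<in> C}\<^sup>*)"

end

theory Submission
  imports Defs
begin

text \<open>Suppose \<open>S\<close> splits into nonempty parts \<open>A\<close> and \<open>B\<close> such that no face sees a colour of
  \<open>A\<close> and a colour of \<open>B\<close>. By minimality neither \<open>A\<close> nor \<open>B\<close> separates \<open>s\<close> from \<open>t\<close>.
  Let \<open>O\<^sub>A\<close> be the union of the faces seeing \<open>A\<close> with the open edges and the vertices
  touching \<open>A\<close>, and \<open>O\<^sub>B\<close> the union of the remaining faces with the open edges and vertices
  touching \<open>B\<close>. These are disjoint open subsets of the plane, and an \<open>s\<close>-\<open>t\<close> path avoiding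
  \<open>V(A)\<close> (resp. \<open>V(B)\<close>) joins \<open>s\<close> to \<open>t\<close> outside \<open>O\<^sub>A\<close> (resp. \<open>O\<^sub>B\<close>). The rest of the
  plane lies on the vertices and on the edges of \<open>G - V(S)\<close>, so the component of \<open>s\<close> in
  \<open>G - V(S)\<close> and the remaining vertices split it into two disjoint closed sets. By the
  unicoherence of the plane the two open sets cannot separate \<open>s\<close> from \<open>t\<close> together, hence
  \<open>t\<close> is in the component of \<open>s\<close>, contradicting that \<open>S\<close> separates.

  The geometric fact about the embedding behind the openness of \<open>O\<^sub>A\<close> is that a face whose
  closure meets the interior of an edge has the whole edge on its boundary; this follows from
  Janiszewski's theorem.\<close>

section \<open>Topology of the plane\<close>

lemma closed_Int_Un_components:
  fixes K L :: "'a::euclidean_space set" and F :: "'a set set"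
  assumes "closed K" "closed L" "F \<subseteq> components (-L)" "\<And>C. C \<in> F \<Longrightarrow> frontier C \<subseteq> K"
  shows "closed ((K \<inter> L) \<union> \<Union>F)"
proof -
  have open_F: "open C" if "C \<in> F" for C
    using that assms(2,3) open_components[of "-L" C] by auto
  have "frontier (\<Union>F) \<subseteq> closure (\<Union>C\<in>F. frontier C)"
    by (rule frontier_Union_subset_closure)
  also have "\<dots> \<subseteq> K"
    using assms(1,4) by (simp add: SUP_least closure_minimal)
  finally have frontier_K: "frontier (\<Union>F) \<subseteq> K" .
  have "frontier (\<Union>F) \<subseteq> L"
  proof
    fix y assume y: "y \<in> frontier (\<Union>F)"
    show "y \<in> L"
    proof (rule ccontr)
      assume "y \<notin> L"
      then obtain C where C: "C \<in> components (-L)" "y \<in> C"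
        by (metis ComplI Union_components UnionE)
      have "open C" using C(1) assms(2) open_components by blast
      moreover have "y \<in> closure (\<Union>F)" using y by (simp add: frontier_def)
      ultimately obtain C' where "C' \<in> F" "C \<inter> C' \<noteq> {}"
        using C(2) open_Int_closure_eq_empty by blast
      then have "C \<in> F" using C(1) assms(3) components_nonoverlap by blast
      then have "y \<in> interior (\<Union>F)"
        using C(2) open_F by (auto simp: interior_open open_Union)
      then show False using y by (simp add: frontier_def)
    qed
  qed
  then have "closure (\<Union>F) \<subseteq> \<Union>F \<union> (K \<inter> L)"
    using frontier_K closure_Un_frontier by blast
  moreover have "closure (K \<inter> L) = K \<inter> L"
    using assms(1,2) by (simp add: closed_Int)
  ultimately have "closure ((K \<inter> L) \<union> \<Union>F) \<subseteq> (K \<inter> L) \<union> \<Union>F"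
    unfolding closure_Un by blast
  then show ?thesis using closure_subset_eq by blast
qed

text \<open>Unicoherence enters here: the frontier of each component of \<open>-C\<close> is connected.\<close>
lemma closed_partition_extend_complement:
  fixes C K L :: "'a::euclidean_space set"
  assumes "closed C" "connected C" "closed K" "closed L" "K \<inter> L = {}" "frontier C \<subseteq> K \<union> L"
  obtains K' L' where "closed K'" "closed L'" "K' \<inter> L' = {}"
    "K \<inter> C \<subseteq> K'" "L \<inter> C \<subseteq> L'" "-C \<subseteq> K' \<union> L'"
proof -
  have side: "frontier D \<subseteq> K \<or> frontier D \<subseteq> L" if D: "D \<in> components (-C)" for D
  proof -
    have "frontier D \<subseteq> C"
      using frontier_of_components_closed_complement assms(1) D by blast
    moreover have "frontier D \<subseteq> closure (-C)"
      using D in_components_subset frontier_def closure_mono by (metis Diff_subset subset_trans)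
    ultimately have "frontier D \<subseteq> K \<union> L"
      using assms(1,6) by (auto simp: frontier_def interior_closure)
    moreover have "connected (frontier D)"
      using connected_frontier_component_complement assms(2) D by blast
    moreover have "K \<inter> L \<inter> frontier D = {}" using assms(5) by blast
    ultimately show ?thesis
      using connected_closedD[of "frontier D" K L] assms(3,4) by blast
  qed
  define K' where "K' = (K \<inter> C) \<union> \<Union>{D \<in> components (-C). frontier D \<subseteq> K}"
  define L' where "L' = (L \<inter> C) \<union> \<Union>{D \<in> components (-C). \<not> frontier D \<subseteq> K}"
  have "closed K'" unfolding K'_def
    by (rule closed_Int_Un_components[OF assms(3,1)]) auto
  moreover have "closed L'" unfolding L'_def
    by (rule closed_Int_Un_components[OF assms(4,1)]) (use side in auto)
  moreover have "K' \<inter> L' = {}"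
  proof -
    have "D \<inter> C = {}" if "D \<in> components (-C)" for D
      using that in_components_subset by blast
    moreover have "D1 \<inter> D2 = {}" if "D1 \<in> components (-C)" "D2 \<in> components (-C)"
      "frontier D1 \<subseteq> K" "\<not> frontier D2 \<subseteq> K" for D1 D2
      using that components_nonoverlap by blast
    ultimately show ?thesis
      using assms(5) unfolding K'_def L'_def Int_Un_distrib Int_Un_distrib2 by fast
  qed
  moreover have "-C \<subseteq> K' \<union> L'"
  proof
    fix q assume "q \<in> -C"
    then obtain D where "D \<in> components (-C)" "q \<in> D"
      by (metis Union_components UnionE)
    then show "q \<in> K' \<union> L'" unfolding K'_def L'_def by blast
  qed
  moreover have "K \<inter> C \<subseteq> K'" "L \<inter> C \<subseteq> L'" unfolding K'_def L'_def by blast+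
  ultimately show ?thesis using that by blast
qed

lemma frontier_connected_component_Int_open:
  fixes S T :: "'a::real_normed_vector set"
  assumes "open T" "S \<inter> T = {}"
  shows "frontier (connected_component_set (-S) a) \<inter> T = {}"
proof -
  define C where "C = connected_component_set (-S) a"
  have "x \<in> interior C" if x: "x \<in> closure C" "x \<in> T" for x
  proof -
    obtain r where r: "r > 0" "ball x r \<subseteq> T" using assms(1) x(2) open_contains_ball by blast
    then obtain y where "y \<in> C" "y \<in> ball x r"
      using x(1) closure_approachable by (metis dist_commute mem_ball)
    then have "a \<in> C"
      using connected_component_in[of "-S" a y] unfolding C_def by (auto simp: connected_component_refl_eq)
    have "connected (C \<union> ball x r)"
      using connected_Un[of C "ball x r"] \<open>y \<in> C\<close> \<open>y \<in> ball x r\<close> unfolding C_def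
      by (metis IntI connected_ball connected_connected_component empty_iff)
    moreover have "C \<union> ball x r \<subseteq> -S"
      using r(2) assms(2) connected_component_subset unfolding C_def by blast
    ultimately have "ball x r \<subseteq> C"
      using connected_component_maximal[of a "C \<union> ball x r" "-S"] \<open>a \<in> C\<close> unfolding C_def by blast
    then show ?thesis using interior_mono[of "ball x r" C] r(1) by auto
  qed
  then show ?thesis unfolding C_def frontier_def by blast
qed

text \<open>A pointwise form of the unicoherence of Euclidean space.\<close>
lemma separation_by_Un_open_partition:
  fixes S T K L :: "'a::euclidean_space set"
  assumes "open S" "open T" "S \<inter> T = {}"
    and "closed K" "closed L" "K \<inter> L = {}" "-(S \<union> T) \<subseteq> K \<union> L"
    and "connected_component (-S) a b" "connected_component (-T) a b" "a \<in> K"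
  shows "b \<in> K"
proof (rule ccontr)
  assume "b \<notin> K"
  moreover have "b \<in> -(S \<union> T)"
    using assms(8,9) connected_component_in by blast
  ultimately have "b \<in> L" using assms(7) by blast
  define C where "C = connected_component_set (-S) a"
  have "closed C" unfolding C_def using assms(1) closed_connected_component by blast
  have "a \<in> C" "b \<in> C" "C \<subseteq> -S"
    using assms(8) connected_component_in unfolding C_def by (auto simp: connected_component_refl_eq)
  have "frontier C \<subseteq> C" using \<open>closed C\<close> frontier_subset_closed by blast
  then have "frontier C \<subseteq> K \<union> L"
    using frontier_connected_component_Int_open[OF assms(2,3)] \<open>C \<subseteq> -S\<close> assms(7)
    unfolding C_def by blast
  then obtain K' L' where KL': "closed K'" "closed L'" "K' \<inter> L' = {}"
    "K \<inter> C \<subseteq> K'" "L \<inter> C \<subseteq> L'" "-C \<subseteq> K' \<union> L'"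
    using closed_partition_extend_complement[OF \<open>closed C\<close> _ assms(4,5,6)] unfolding C_def by auto
  define Q where "Q = connected_component_set (-T) a"
  have "Q \<subseteq> K' \<union> L'"
  proof
    fix q assume "q \<in> Q"
    then have "q \<in> C \<Longrightarrow> q \<in> K \<union> L"
      using \<open>C \<subseteq> -S\<close> assms(7) connected_component_in unfolding Q_def by blast
    then show "q \<in> K' \<union> L'" using KL'(4-6) by blast
  qed
  moreover have "a \<in> Q" "b \<in> Q"
    using assms(9) connected_component_in unfolding Q_def by (auto simp: connected_component_refl_eq)
  moreover have "a \<in> K'" "b \<in> L'" using KL'(4,5) \<open>a \<in> C\<close> \<open>b \<in> C\<close> \<open>b \<in> L\<close> assms(10) by blast+
  ultimately show False
    using connected_closedD[of Q K' L'] KL'(1-3) unfolding Q_def by auto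
qed

lemma Janiszewski_ball_subset:
  fixes S T f :: "complex set"
  assumes "compact S" "connected (-S)" "closed T" "connected (S \<inter> T)" "p \<notin> T"
    and "connected f" "f \<inter> (S \<union> T) = {}" "frontier f \<subseteq> S \<union> T" "p \<in> closure f"
  obtains r where "r > 0" "ball p r - (S \<union> T) \<subseteq> f"
proof -
  obtain r where r: "r > 0" "ball p r \<subseteq> -T"
    using assms(3,5) open_contains_ball by (metis ComplI open_Compl)
  obtain z where z: "z \<in> f" "dist p z < r"
    using closure_approachableD assms(9) r(1) by blast
  have "w \<in> f" if w: "w \<in> ball p r" "w \<notin> S \<union> T" for w
  proof -
    have "z \<notin> S \<union> T" using z(1) assms(7) by blast
    then have "connected_component (-S) z w"
      using assms(2) w(2) unfolding connected_component_def by blast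
    moreover have "connected_component (-T) z w"
      unfolding connected_component_def using r(2) z(2) w(1) by (intro exI[of _ "ball p r"]) auto
    ultimately have "connected_component (-(S \<union> T)) z w"
      using Janiszewski[OF assms(1,3,4)] by blast
    then obtain C where C: "connected C" "C \<subseteq> -(S \<union> T)" "z \<in> C" "w \<in> C"
      unfolding connected_component_def by blast
    then have "C \<inter> frontier f = {}" using assms(8) by blast
    then show "w \<in> f"
      using connected_Int_frontier[OF C(1), of f] C(3,4) z(1) by blast
  qed
  then show ?thesis using that r(1) by blast
qed

lemma image_Icc_subset_closure_image_Ioo:
  fixes g :: "real \<Rightarrow> 'a::topological_space"
  assumes "continuous_on {a..b} g" "a < b"
  shows "g ` {a..b} \<subseteq> closure (g ` {a<..<b})"
proof -
  have "g ` closure {a<..<b} \<subseteq> closure (g ` {a<..<b})"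
    by (rule image_closure_subset) (use assms in \<open>auto intro: closure_subset[THEN subsetD]\<close>)
  then show ?thesis using assms(2) by simp
qed

text \<open>Otherwise the inverse of \<open>g\<close> would map the connected punctured ball onto a connected
  set of parameters containing points on both sides of \<open>t\<close>, but not \<open>t\<close>.\<close>
lemma arc_image_contains_no_ball:
  fixes g :: "real \<Rightarrow> 'a::euclidean_space"
  assumes "arc g" "2 \<le> DIM('a)" "0 < t" "t < 1" "r > 0"
  shows "\<not> ball (g t) r \<subseteq> path_image g"
proof
  assume ball: "ball (g t) r \<subseteq> path_image g"
  obtain h where h: "homeomorphism {0..1} (path_image g) g h"
    using homeomorphism_arc assms(1) by blast
  define B where "B = ball (g t) r - {g t}"
  have "connected B" unfolding B_def using assms(2) by (rule connected_punctured_ball)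
  then have "connected (h ` B)"
    using h ball unfolding B_def homeomorphism_def
    by (intro connected_continuous_image) (auto elim: continuous_on_subset)
  have "continuous_on {0..1} g" using assms(1) arc_imp_path path_def by blast
  then obtain d where d: "d > 0" "\<forall>s\<in>{0..1}. dist s t < d \<longrightarrow> dist (g s) (g t) < r"
    using assms(3,4,5) unfolding continuous_on_iff by (metis atLeastAtMost_iff less_le)
  define \<delta> where "\<delta> = min (d/2) (min t (1 - t) / 2)"
  have \<delta>: "0 < \<delta>" "\<delta> < d" "0 \<le> t - \<delta>" "t + \<delta> \<le> 1"
    using d(1) assms(3,4) unfolding \<delta>_def min_def by (auto simp: field_simps)
  have "s \<in> h ` B" if "s \<in> {t - \<delta>, t + \<delta>}" for s
  proof -
    have s: "s \<in> {0..1}" "s \<noteq> t" "dist s t < d" using that \<delta> by (auto simp: dist_real_def)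
    then have "g s \<in> B"
      using d(2) arcD[OF assms(1), of s t] assms(3,4) unfolding B_def by (auto simp: dist_commute)
    moreover have "h (g s) = s" using h s(1) by (simp add: homeomorphism_def)
    ultimately show ?thesis by force
  qed
  then have "t \<in> h ` B"
    using connected_contains_Icc[OF \<open>connected (h ` B)\<close>, of "t - \<delta>" "t + \<delta>"] \<delta>(1) by auto
  then obtain y where y: "y \<in> B" "h y = t" by blast
  then have "y = g t" using h ball unfolding B_def homeomorphism_def by force
  then show False using y(1) unfolding B_def by blast
qed

lemma continuous_last_point_in_closed:
  fixes g :: "real \<Rightarrow> 'a::topological_space"
  assumes "continuous_on {a..b} g" "closed Z" "a \<le> b" "g a \<in> Z" "g b \<notin> Z"
  obtains c where "a \<le> c" "c < b" "g c \<in> Z" "\<And>s. c < s \<Longrightarrow> s \<le> b \<Longrightarrow> g s \<notin> Z"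
proof -
  define M where "M = {a..b} \<inter> g -` Z"
  have "closed M" unfolding M_def
    using continuous_closed_preimage[OF assms(1) _ assms(2)] by (simp add: Int_commute)
  have "bdd_above M" unfolding M_def by (simp add: bdd_above_Int1)
  have "a \<in> M" using assms(3,4) unfolding M_def by simp
  define c where "c = Sup M"
  have "c \<in> M" unfolding c_def using \<open>closed M\<close> \<open>a \<in> M\<close> \<open>bdd_above M\<close> closed_contains_Sup by blast
  moreover have "g s \<notin> Z" if "c < s" "s \<le> b" for s
  proof
    assume "g s \<in> Z"
    then have "s \<in> M" using that \<open>c \<in> M\<close> unfolding M_def by auto
    then have "s \<le> c" using cSup_upper \<open>bdd_above M\<close> unfolding c_def by blast
    then show False using that by simp
  qed
  ultimately show ?thesis
    using that assms(5) unfolding M_def by (force simp: order.order_iff_strict)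
qed

lemma arc_Janiszewski_pieces:
  fixes g :: "real \<Rightarrow> complex"
  assumes g: "arc g" and "closed R" and gR: "g ` {0<..<1} \<inter> R = {}"
    and c: "0 < c" "c < b" "b \<le> 1"
  shows "compact (g ` {0..c})" "connected (-(g ` {0..c}))" "closed (R \<union> g ` {b..1})"
    "connected (g ` {0..c} \<inter> (R \<union> g ` {b..1}))" "g c \<notin> R \<union> g ` {b..1}"
proof -
  have cont: "continuous_on {0..1} g" using g arc_imp_path path_def by blast
  have inj: "s = t" if "g s = g t" "s \<in> {0..1}" "t \<in> {0..1}" for s t
    using arcD[OF g] that by blast
  show "compact (g ` {0..c})"
    using c cont by (intro compact_continuous_image) (auto elim: continuous_on_subset)
  have "g ` {0..c} = path_image (subpath 0 c g)" using c by (simp add: path_image_subpath)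
  moreover have "arc (subpath 0 c g)" using arc_subpath_arc[OF g] c by auto
  ultimately show "connected (-(g ` {0..c}))"
    using connected_arc_complement by (metis DIM_complex order_refl)
  have "compact (g ` {b..1})"
    using cont c by (intro compact_continuous_image) (auto elim: continuous_on_subset)
  then show "closed (R \<union> g ` {b..1})" using \<open>closed R\<close> by (simp add: closed_Un compact_imp_closed)
  have "g ` {0..c} \<inter> (R \<union> g ` {b..1}) \<subseteq> {g 0}"
  proof
    fix x assume "x \<in> g ` {0..c} \<inter> (R \<union> g ` {b..1})"
    then obtain u where u: "u \<in> {0..c}" "x = g u" "x \<in> R \<union> g ` {b..1}" by blast
    have "x \<notin> g ` {b..1}" using inj u(1,2) c by fastforce
    then have "g u \<in> R" using u(2,3) by blast
    moreover have "u \<in> {0<..<1} \<or> u = 0" using u(1) c by auto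
    ultimately show "x \<in> {g 0}" using gR u(2) by blast
  qed
  then show "connected (g ` {0..c} \<inter> (R \<union> g ` {b..1}))"
    by (metis connected_empty connected_sing subset_singletonD)
  show "g c \<notin> R \<union> g ` {b..1}" using gR inj c by fastforce
qed

text \<open>If \<open>g c\<close> is the last point of \<open>g[a,b]\<close> in \<open>closure f\<close>, Janiszewski's theorem puts every
  point near \<open>g c\<close> off \<open>g[0,c] \<union> R \<union> g[b,1]\<close> into \<open>f\<close>; but the arc just after \<open>g c\<close> consists
  of such points and avoids \<open>f\<close>.\<close>
lemma arc_closure_component_forward:
  fixes g :: "real \<Rightarrow> complex"
  assumes g: "arc g" and "closed R" and gR: "g ` {0<..<1} \<inter> R = {}"
    and f: "f \<in> components (-(R \<union> path_image g))"
    and ab: "0 < a" "a \<le> b" "b \<le> 1" and "g a \<in> closure f"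
  shows "g b \<in> closure f"
proof (rule ccontr)
  assume "g b \<notin> closure f"
  have cont: "continuous_on {0..1} g" using g arc_imp_path path_def by blast
  then have "continuous_on {a..b} g" using ab by (auto elim: continuous_on_subset)
  then obtain c where c: "a \<le> c" "c < b" "g c \<in> closure f"
    and after_c: "\<And>s. c < s \<Longrightarrow> s \<le> b \<Longrightarrow> g s \<notin> closure f"
    using continuous_last_point_in_closed[of a b g "closure f"] ab \<open>g a \<in> closure f\<close> \<open>g b \<notin> closure f\<close>
    by auto
  define S where "S = g ` {0..c}"
  define T where "T = R \<union> g ` {b..1}"
  have "0 < c" using c(1) ab(1) by simp
  note pieces = arc_Janiszewski_pieces[OF g \<open>closed R\<close> gR \<open>0 < c\<close> c(2) ab(3), folded S_def T_def]
  have "{0..1} = {0..c} \<union> {c<..<b} \<union> {b..1::real}" using c ab by auto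
  then have "path_image g = S \<union> g ` {c<..<b} \<union> g ` {b..1}"
    unfolding S_def path_image_def by (metis image_Un)
  then have drawn: "R \<union> path_image g = S \<union> g ` {c<..<b} \<union> T" unfolding T_def by blast
  have f_out: "f \<inter> (R \<union> path_image g) = {}" using f in_components_subset by blast
  have "frontier f \<subseteq> R \<union> path_image g"
    using frontier_of_components_closed_complement f \<open>closed R\<close> g
    by (metis closed_Un closed_arc_image)
  moreover have "frontier f \<inter> g ` {c<..<b} = {}"
    using after_c by (force simp: frontier_def)
  ultimately have "frontier f \<subseteq> S \<union> T" using drawn by blast
  moreover have "f \<inter> (S \<union> T) = {}" using f_out drawn by blast
  ultimately obtain r where r: "r > 0" "ball (g c) r - (S \<union> T) \<subseteq> f"
    using Janiszewski_ball_subset[OF pieces in_components_connected[OF f] _ _ c(3)] by blast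
  have "continuous_on {c..b} g" using cont c ab by (auto elim: continuous_on_subset)
  then have "g c \<in> closure (g ` {c<..<b})"
    using image_Icc_subset_closure_image_Ioo[of c b g] c(2) by auto
  then obtain s where s: "s \<in> {c<..<b}" "dist (g s) (g c) < r"
    using closure_approachable r(1) by blast
  have "g s \<notin> S \<union> T"
  proof -
    have "s \<in> {0<..<1}" using s(1) c ab by auto
    moreover have "g s \<noteq> g u" if "u \<in> {0..c} \<union> {b..1}" for u
      using arcD[OF g, of s u] that s(1) c ab by auto
    ultimately show ?thesis using gR unfolding S_def T_def by blast
  qed
  then have "g s \<in> f" using r(2) s(2) by (auto simp: dist_commute)
  moreover have "g s \<in> path_image g" using s(1) c ab by (auto simp: path_image_def)
  ultimately show False using f_out by blast
qed

lemma arc_subset_closure_component: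
  fixes g :: "real \<Rightarrow> complex"
  assumes g: "arc g" and R: "closed R" and gR: "g ` {0<..<1} \<inter> R = {}"
    and f: "f \<in> components (-(R \<union> path_image g))"
    and a: "0 < a" "a < 1" "g a \<in> closure f"
  shows "path_image g \<subseteq> closure f"
proof
  fix y assume "y \<in> path_image g"
  then obtain t where t: "t \<in> {0..1}" "y = g t" by (auto simp: path_image_def)
  show "y \<in> closure f"
  proof (cases "a \<le> t")
    case True
    then show ?thesis using arc_closure_component_forward[OF g R gR f] a t by auto
  next
    case False
    have "reversepath g ` {0<..<1} \<subseteq> g ` {0<..<1}"
      by (auto simp: reversepath_def image_iff intro!: bexI[where x="1 - _"])
    then have "reversepath g ` {0<..<1} \<inter> R = {}" using gR by blast
    moreover have "arc (reversepath g)" using g by (simp add: arc_reversepath)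
    moreover have "f \<in> components (-(R \<union> path_image (reversepath g)))"
      using f by (simp add: path_image_reversepath)
    moreover have "reversepath g (1 - a) \<in> closure f" using a by (simp add: reversepath_def)
    ultimately have "reversepath g (1 - t) \<in> closure f"
      using arc_closure_component_forward[of "reversepath g" R f "1 - a" "1 - t"] R a False t
      by auto
    then show ?thesis using t by (simp add: reversepath_def)
  qed
qed

section \<open>Plane graphs and their faces\<close>

lemma conn_in_step:
  assumes "conn_in E A s u" "{u, w} \<in> E" "w \<in> A"
  shows "conn_in E A s w"
  using assms rtrancl_into_rtrancl[of s u "{(x, y). {x, y} \<in> E \<and> x \<in> A \<and> y \<in> A}" w]
  unfolding conn_in_def by auto

locale plane_graph =
  fixes V :: "'v set" and E :: "'v set set" and pos :: "'v \<Rightarrow> complex"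
    and \<gamma> :: "'v set \<Rightarrow> real \<Rightarrow> complex"
  assumes simple: "simple_graph V E" and embedding: "plane_embedding V E pos \<gamma>"
begin

abbreviation \<Gamma> :: "complex set" where "\<Gamma> \<equiv> drawing V E pos \<gamma>"

lemma finite_V: "finite V"
  using simple unfolding simple_graph_def by simp

lemma
  shows inj_pos: "inj_on pos V"
    and edges_embedded: "\<forall>e\<in>E. arc (\<gamma> e) \<and>
        (\<exists>u v. e = {u, v} \<and> pathstart (\<gamma> e) = pos u \<and> pathfinish (\<gamma> e) = pos v) \<and>
        path_image (\<gamma> e) \<inter> pos ` V = pos ` e"
    and edge_images_meet: "\<forall>e\<in>E. \<forall>e'\<in>E. e \<noteq> e' \<longrightarrow>
        path_image (\<gamma> e) \<inter> path_image (\<gamma> e') \<subseteq> pos ` (e \<inter> e')"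
  using embedding unfolding plane_embedding_def by simp_all

lemma arc_edge: "e \<in> E \<Longrightarrow> arc (\<gamma> e)"
  using edges_embedded by simp

lemma edge_image_Int_vertices: "e \<in> E \<Longrightarrow> path_image (\<gamma> e) \<inter> pos ` V = pos ` e"
  using edges_embedded by simp

lemma edge_images_Int:
  "e \<in> E \<Longrightarrow> e' \<in> E \<Longrightarrow> e \<noteq> e' \<Longrightarrow> path_image (\<gamma> e) \<inter> path_image (\<gamma> e') \<subseteq> pos ` (e \<inter> e')"
  using edge_images_meet by simp

lemma edgeE:
  assumes "e \<in> E"
  obtains u v where "u \<in> V" "v \<in> V" "u \<noteq> v" "e = {u, v}" "\<gamma> e 0 = pos u" "\<gamma> e 1 = pos v"
proof -
  obtain u v where uv: "e = {u, v}" "pathstart (\<gamma> e) = pos u" "pathfinish (\<gamma> e) = pos v"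
    using edges_embedded assms by blast
  have "\<forall>e\<in>E. \<exists>u v. u \<in> V \<and> v \<in> V \<and> u \<noteq> v \<and> e = {u, v}"
    using simple unfolding simple_graph_def by simp
  then obtain u' v' where "u' \<in> V" "v' \<in> V" "u' \<noteq> v'" "e = {u', v'}"
    using assms by blast
  then have "u \<in> V" "v \<in> V" "u \<noteq> v" using uv(1) by (metis doubleton_eq_iff)+
  then show ?thesis using that uv by (simp add: pathstart_def pathfinish_def)
qed

lemma edge_subset_V: "e \<in> E \<Longrightarrow> e \<subseteq> V"
  by (rule edgeE) auto

lemma finite_E: "finite E"
proof (rule finite_subset)
  show "E \<subseteq> Pow V" using edge_subset_V by blast
qed (simp add: finite_V)

lemma pos_in_edge_image_iff:
  assumes "e \<in> E" "v \<in> V"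
  shows "pos v \<in> path_image (\<gamma> e) \<longleftrightarrow> v \<in> e"
  using edge_image_Int_vertices[OF assms(1)] inj_pos edge_subset_V[OF assms(1)] assms(2)
  by (auto simp: inj_on_def)

lemma edge_interior_not_vertex:
  assumes "e \<in> E" "0 < t" "t < 1"
  shows "\<gamma> e t \<notin> pos ` V"
proof
  assume "\<gamma> e t \<in> pos ` V"
  moreover have "\<gamma> e t \<in> path_image (\<gamma> e)" using assms(2,3) by (auto simp: path_image_def)
  ultimately have "\<gamma> e t \<in> pos ` e" using edge_image_Int_vertices[OF assms(1)] by blast
  moreover obtain u v where "e = {u, v}" "\<gamma> e 0 = pos u" "\<gamma> e 1 = pos v"
    using edgeE[OF assms(1)] by metis
  ultimately have "\<gamma> e t \<in> {\<gamma> e 0, \<gamma> e 1}" by auto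
  moreover have "\<gamma> e t \<noteq> \<gamma> e s" if "s \<in> {0, 1}" for s
    using arcD[OF arc_edge[OF assms(1)], of t s] that assms(2,3) by auto
  ultimately show False by blast
qed

lemma edge_interior_not_in_other_edge:
  assumes "e \<in> E" "e' \<in> E" "e \<noteq> e'" "0 < t" "t < 1"
  shows "\<gamma> e t \<notin> path_image (\<gamma> e')"
proof
  assume "\<gamma> e t \<in> path_image (\<gamma> e')"
  moreover have "\<gamma> e t \<in> path_image (\<gamma> e)" using assms(4,5) by (auto simp: path_image_def)
  ultimately have "\<gamma> e t \<in> pos ` V"
    using edge_images_Int[OF assms(1-3)] edge_subset_V[OF assms(1)] by blast
  then show False using edge_interior_not_vertex assms(1,4,5) by blast
qed

lemma closed_edge_image: "e \<in> E \<Longrightarrow> closed (path_image (\<gamma> e))"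
  using arc_edge closed_arc_image by blast

lemma closed_vertices_edges:
  assumes "W \<subseteq> V" "E' \<subseteq> E"
  shows "closed (pos ` W \<union> (\<Union>e\<in>E'. path_image (\<gamma> e)))"
proof (intro closed_Un closed_UN)
  have "finite W" by (rule finite_subset[OF assms(1) finite_V])
  then show "closed (pos ` W)" by (simp add: finite_imp_closed)
  show "finite E'" by (rule finite_subset[OF assms(2) finite_E])
qed (use assms(2) closed_edge_image in blast)

lemma closed_drawing: "closed \<Gamma>"
  unfolding drawing_def by (rule closed_vertices_edges) auto

lemma edge_image_subset_drawing: "e \<in> E \<Longrightarrow> path_image (\<gamma> e) \<subseteq> \<Gamma>"
  unfolding drawing_def by blast

lemma edge_point_in_drawing: "e \<in> E \<Longrightarrow> 0 \<le> t \<Longrightarrow> t \<le> 1 \<Longrightarrow> \<gamma> e t \<in> \<Gamma>"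
  using edge_image_subset_drawing[of e] by (auto simp: path_image_def)

lemma vertex_in_drawing: "v \<in> V \<Longrightarrow> pos v \<in> \<Gamma>"
  unfolding drawing_def by blast

lemma drawing_edge_cases:
  assumes "x \<in> \<Gamma>"
  obtains (vertex) v where "v \<in> V" "x = pos v"
    | (edge) e t where "e \<in> E" "0 < t" "t < 1" "x = \<gamma> e t"
proof -
  consider "x \<in> pos ` V" | e where "e \<in> E" "x \<in> path_image (\<gamma> e)"
    using assms unfolding drawing_def by blast
  then show thesis
  proof cases
    case (2 e)
    then obtain t where t: "t \<in> {0..1}" "x = \<gamma> e t" by (auto simp: path_image_def)
    show thesis
    proof (cases "0 < t \<and> t < 1")
      case True
      then show thesis using that(2) 2(1) t(2) by blast
    next
      case False
      then have "t = 0 \<or> t = 1" using t(1) by auto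
      moreover obtain u v where "u \<in> V" "v \<in> V" "\<gamma> e 0 = pos u" "\<gamma> e 1 = pos v"
        by (rule edgeE[OF 2(1)])
      ultimately have "x = pos u \<or> x = pos v" using t(2) by auto
      then show thesis using that(1) \<open>u \<in> V\<close> \<open>v \<in> V\<close> by blast
    qed
  qed (use that in blast)
qed

lemma faces_eq_components: "faces V E pos \<gamma> = components (-\<Gamma>)"
  by (simp add: faces_def Compl_eq_Diff_UNIV)

lemma open_face: "f \<in> faces V E pos \<gamma> \<Longrightarrow> open f"
  unfolding faces_eq_components using closed_drawing open_components open_Compl by blast

lemma face_disjoint_drawing: "f \<in> faces V E pos \<gamma> \<Longrightarrow> f \<inter> \<Gamma> = {}"
  unfolding faces_eq_components using in_components_subset by blast

lemma frontier_face_subset: "f \<in> faces V E pos \<gamma> \<Longrightarrow> frontier f \<subseteq> \<Gamma>"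
  unfolding faces_eq_components using frontier_of_components_closed_complement closed_drawing by blast

lemma face_of_point:
  assumes "z \<notin> \<Gamma>"
  obtains f where "f \<in> faces V E pos \<gamma>" "z \<in> f"
proof
  show "connected_component_set (-\<Gamma>) z \<in> faces V E pos \<gamma>"
    using assms by (simp add: faces_eq_components componentsI)
  show "z \<in> connected_component_set (-\<Gamma>) z" using assms by simp
qed

lemma faces_disjoint:
  "f \<in> faces V E pos \<gamma> \<Longrightarrow> f' \<in> faces V E pos \<gamma> \<Longrightarrow> f \<noteq> f' \<Longrightarrow> f \<inter> f' = {}"
  unfolding faces_eq_components using components_nonoverlap by blast

definition drawing_without :: "'v set \<Rightarrow> complex set" where
  "drawing_without e = pos ` V \<union> (\<Union>e'\<in>E - {e}. path_image (\<gamma> e'))"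

lemma closed_drawing_without: "closed (drawing_without e)"
  unfolding drawing_without_def by (rule closed_vertices_edges) auto

lemma drawing_eq_without: "e \<in> E \<Longrightarrow> \<Gamma> = drawing_without e \<union> path_image (\<gamma> e)"
  unfolding drawing_def drawing_without_def by blast

lemma edge_interior_Int_drawing_without:
  assumes "e \<in> E"
  shows "\<gamma> e ` {0<..<1} \<inter> drawing_without e = {}"
proof -
  have "\<gamma> e t \<notin> drawing_without e" if "0 < t" "t < 1" for t
    using edge_interior_not_vertex[OF assms that] edge_interior_not_in_other_edge[OF assms _ _ that]
    unfolding drawing_without_def by blast
  then show ?thesis by fastforce
qed

lemma boundary_edgeI:
  assumes f: "f \<in> faces V E pos \<gamma>" and e: "e \<in> E"
    and a: "0 < a" "a < 1" "\<gamma> e a \<in> closure f"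
  shows "e \<in> boundary_edges E \<gamma> f"
proof -
  have "f \<in> components (-(drawing_without e \<union> path_image (\<gamma> e)))"
    using f e drawing_eq_without faces_eq_components by simp
  then have "path_image (\<gamma> e) \<subseteq> closure f"
    using arc_subset_closure_component[OF arc_edge[OF e] closed_drawing_without
        edge_interior_Int_drawing_without[OF e]] a by blast
  moreover have "path_image (\<gamma> e) \<inter> f = {}"
    using face_disjoint_drawing[OF f] edge_image_subset_drawing[OF e] by blast
  ultimately have "path_image (\<gamma> e) \<subseteq> frontier f"
    using open_face[OF f] by (auto simp: frontier_def interior_open)
  then show ?thesis using e unfolding boundary_edges_def by blast
qed

lemma drawing_near_edge_point:
  assumes e: "e \<in> E" and a: "0 < a" "a < 1"
  obtains r where "r > 0" "ball (\<gamma> e a) r \<inter> \<Gamma> \<subseteq> \<gamma> e ` {0<..<1}"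
proof -
  have "\<gamma> e a \<in> \<gamma> e ` {0<..<1}" using a by simp
  then have "\<gamma> e a \<in> -drawing_without e"
    using edge_interior_Int_drawing_without[OF e] by blast
  moreover have "open (-drawing_without e)" using closed_drawing_without by blast
  ultimately obtain r where r: "r > 0" "ball (\<gamma> e a) r \<subseteq> -drawing_without e"
    using open_contains_ball by blast
  have "x \<in> \<gamma> e ` {0<..<1}" if x: "x \<in> ball (\<gamma> e a) r" "x \<in> \<Gamma>" for x
    using x(2)
  proof (cases rule: drawing_edge_cases)
    case (vertex v)
    then show ?thesis using x(1) r(2) unfolding drawing_without_def by blast
  next
    case (edge e' t)
    then have "x \<in> path_image (\<gamma> e')" by (auto simp: path_image_def)
    then have "e' = e" using x(1) r(2) edge(1) unfolding drawing_without_def by blast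
    then show ?thesis using edge by simp
  qed
  then have "ball (\<gamma> e a) r \<inter> \<Gamma> \<subseteq> \<gamma> e ` {0<..<1}" by blast
  with r(1) show ?thesis by (rule that)
qed

lemma drawing_near_vertex:
  assumes v: "v \<in> V"
  obtains r where "r > 0" "ball (pos v) r \<inter> \<Gamma> \<subseteq> insert (pos v) (\<Union>e\<in>{e\<in>E. v \<in> e}. \<gamma> e ` {0<..<1})"
proof -
  define R where "R = pos ` (V - {v}) \<union> (\<Union>e\<in>{e\<in>E. v \<notin> e}. path_image (\<gamma> e))"
  have "closed R" unfolding R_def by (rule closed_vertices_edges) auto
  have "pos v \<notin> R"
    using inj_pos v pos_in_edge_image_iff[OF _ v] unfolding R_def by (auto simp: inj_on_def)
  moreover have "open (-R)" using \<open>closed R\<close> by blast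
  ultimately obtain r where r: "r > 0" "ball (pos v) r \<subseteq> -R"
    using open_contains_ball by blast
  have "x \<in> insert (pos v) (\<Union>e\<in>{e\<in>E. v \<in> e}. \<gamma> e ` {0<..<1})"
    if x: "x \<in> ball (pos v) r" "x \<in> \<Gamma>" for x
    using x(2)
  proof (cases rule: drawing_edge_cases)
    case (vertex w)
    then show ?thesis using x(1) r(2) unfolding R_def by blast
  next
    case (edge e t)
    then have "x \<in> path_image (\<gamma> e)" by (auto simp: path_image_def)
    then have "v \<in> e" using x(1) r(2) edge(1) unfolding R_def by blast
    moreover have "x \<in> \<gamma> e ` {0<..<1}" using edge by simp
    ultimately show ?thesis using edge(1) by blast
  qed
  then have "ball (pos v) r \<inter> \<Gamma> \<subseteq> insert (pos v) (\<Union>e\<in>{e\<in>E. v \<in> e}. \<gamma> e ` {0<..<1})"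
    by blast
  with r(1) show ?thesis by (rule that)
qed

lemma ball_meets_closure_face:
  assumes "f \<in> faces V E pos \<gamma>" "z \<in> f" "z \<in> ball c r" "q \<in> \<Gamma>" "q \<in> ball c r"
  obtains q' where "q' \<in> ball c r" "q' \<in> \<Gamma>" "q' \<in> closure f"
proof -
  have "ball c r \<inter> f \<noteq> {}" "ball c r - f \<noteq> {}"
    using assms face_disjoint_drawing by blast+
  then obtain q' where "q' \<in> ball c r" "q' \<in> frontier f"
    using connected_Int_frontier[of "ball c r" f] by blast
  then show ?thesis
    using that frontier_face_subset[OF assms(1)] by (auto simp: frontier_def)
qed

lemma boundary_edge_at_vertex:
  assumes f: "f \<in> faces V E pos \<gamma>" and v: "v \<in> V" and e0: "e0 \<in> E" "v \<in> e0"
    and "pos v \<in> closure f"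
  shows "\<exists>e\<in>E. v \<in> e \<and> e \<in> boundary_edges E \<gamma> f"
proof -
  obtain r where r: "r > 0"
    "ball (pos v) r \<inter> \<Gamma> \<subseteq> insert (pos v) (\<Union>e\<in>{e\<in>E. v \<in> e}. \<gamma> e ` {0<..<1})"
    by (rule drawing_near_vertex[OF v])
  define B where "B = ball (pos v) r - {pos v}"
  have "connected B" unfolding B_def by (rule connected_punctured_ball) simp
  obtain z where z: "z \<in> f" "dist (pos v) z < r"
    using closure_approachableD[OF \<open>pos v \<in> closure f\<close> r(1)] by blast
  have "z \<noteq> pos v" using z(1) face_disjoint_drawing[OF f] vertex_in_drawing[OF v] by blast
  then have "z \<in> B" using z(2) unfolding B_def by simp
  have "continuous_on {0..1} (\<gamma> e0)" using arc_edge[OF e0(1)] arc_imp_path path_def by blast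
  have "pos v \<in> path_image (\<gamma> e0)" using pos_in_edge_image_iff[OF e0(1) v] e0(2) by simp
  also have "\<dots> \<subseteq> closure (\<gamma> e0 ` {0<..<1})"
    using image_Icc_subset_closure_image_Ioo[OF \<open>continuous_on {0..1} (\<gamma> e0)\<close>]
    unfolding path_image_def by simp
  finally obtain y where "y \<in> \<gamma> e0 ` {0<..<1}" "dist y (pos v) < r"
    using closure_approachable r(1) by blast
  then obtain t where t: "0 < t" "t < 1" "dist (\<gamma> e0 t) (pos v) < r" by auto
  have "\<gamma> e0 t \<noteq> pos v" using edge_interior_not_vertex[OF e0(1) t(1,2)] v by blast
  then have "\<gamma> e0 t \<in> B" using t(3) unfolding B_def by (simp add: dist_commute)
  have "\<gamma> e0 t \<in> \<Gamma>" using edge_point_in_drawing[OF e0(1), of t] t by simp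
  then have "\<gamma> e0 t \<notin> f" using face_disjoint_drawing[OF f] by blast
  then obtain q where q: "q \<in> B" "q \<in> frontier f"
    using connected_Int_frontier[OF \<open>connected B\<close>, of f] \<open>z \<in> B\<close> z(1)
      \<open>\<gamma> e0 t \<in> B\<close> \<open>\<gamma> e0 t \<notin> f\<close> by blast
  then have "q \<in> (\<Union>e\<in>{e\<in>E. v \<in> e}. \<gamma> e ` {0<..<1})"
    using r(2) frontier_face_subset[OF f] unfolding B_def by blast
  then obtain e a where "e \<in> E" "v \<in> e" "0 < a" "a < 1" "q = \<gamma> e a" by auto
  then show ?thesis
    using boundary_edgeI[OF f] q(2) by (auto simp: frontier_def)
qed

lemma edge_on_some_face_boundary:
  assumes e: "e \<in> E"
  obtains f where "f \<in> faces V E pos \<gamma>" "e \<in> boundary_edges E \<gamma> f"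
proof -
  obtain r where r: "r > 0" "ball (\<gamma> e (1/2)) r \<inter> \<Gamma> \<subseteq> \<gamma> e ` {0<..<1}"
    using drawing_near_edge_point[OF e, of "1/2"] by auto
  have "\<not> ball (\<gamma> e (1/2)) r \<subseteq> path_image (\<gamma> e)"
    by (rule arc_image_contains_no_ball[OF arc_edge[OF e]]) (use r(1) in auto)
  then obtain z where z: "z \<in> ball (\<gamma> e (1/2)) r" "z \<notin> path_image (\<gamma> e)" by blast
  then have "z \<notin> \<Gamma>" using r(2) by (auto simp: path_image_def)
  then obtain f where f: "f \<in> faces V E pos \<gamma>" "z \<in> f" by (rule face_of_point)
  have "\<gamma> e (1/2) \<in> \<Gamma>" using edge_point_in_drawing[OF e] by simp
  then obtain q where q: "q \<in> ball (\<gamma> e (1/2)) r" "q \<in> \<Gamma>" "q \<in> closure f"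
    using ball_meets_closure_face[OF f z(1)] r(1) by (metis centre_in_ball)
  then have "q \<in> \<gamma> e ` {0<..<1}" using r(2) by blast
  then obtain a where "0 < a" "a < 1" "q = \<gamma> e a" by auto
  then show ?thesis using that f(1) boundary_edgeI[OF f(1) e] q(3) by blast
qed

section \<open>Regions of a colour class\<close>

lemma face_colors_boundary_edge:
  "e \<in> boundary_edges E \<gamma> f \<Longrightarrow> w \<in> e \<Longrightarrow> \<sigma> w \<subseteq> face_colors E \<gamma> \<sigma> f"
  unfolding face_colors_def by blast

lemma edge_colors_seen_by_face:
  assumes "e \<in> E" "w \<in> e" "w' \<in> e" "\<sigma> w \<inter> A \<noteq> {}" "\<sigma> w' \<inter> B \<noteq> {}"
  obtains f where "f \<in> faces V E pos \<gamma>"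
    "face_colors E \<gamma> \<sigma> f \<inter> A \<noteq> {}" "face_colors E \<gamma> \<sigma> f \<inter> B \<noteq> {}"
proof -
  obtain f where "f \<in> faces V E pos \<gamma>" "e \<in> boundary_edges E \<gamma> f"
    by (rule edge_on_some_face_boundary[OF assms(1)])
  then show ?thesis
    using that face_colors_boundary_edge[of e f _ \<sigma>] assms(2-5) by blast
qed

text \<open>Isolated vertices are left out: no face sees their colours, so they could otherwise lie
  in the regions of two colour classes that no face connects.\<close>
definition color_region :: "('v \<Rightarrow> nat set) \<Rightarrow> nat set \<Rightarrow> complex set set \<Rightarrow> complex set" where
  "color_region \<sigma> X F = \<Union>F \<union> (\<Union>e\<in>{e\<in>E. \<exists>w\<in>e. \<sigma> w \<inter> X \<noteq> {}}. \<gamma> e ` {0<..<1})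
     \<union> pos ` {v\<in>V. \<sigma> v \<inter> X \<noteq> {} \<and> (\<exists>e\<in>E. v \<in> e)}"

lemma color_region_face:
  assumes "f \<in> F" "x \<in> f"
  shows "x \<in> color_region \<sigma> X F"
  unfolding color_region_def using UnionI[OF assms] by (rule UnI1[OF UnI1])

lemma color_region_edge:
  assumes "e \<in> E" "w \<in> e" "\<sigma> w \<inter> X \<noteq> {}" "0 < t" "t < 1"
  shows "\<gamma> e t \<in> color_region \<sigma> X F"
proof -
  have "e \<in> {e\<in>E. \<exists>w\<in>e. \<sigma> w \<inter> X \<noteq> {}}" using assms(1-3) by blast
  moreover have "\<gamma> e t \<in> \<gamma> e ` {0<..<1}" using assms(4,5) by simp
  ultimately show ?thesis unfolding color_region_def by (rule UnI1[OF UnI2[OF UN_I]])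
qed

lemma color_region_vertex:
  assumes "v \<in> V" "\<sigma> v \<inter> X \<noteq> {}" "e \<in> E" "v \<in> e"
  shows "pos v \<in> color_region \<sigma> X F"
proof -
  have "v \<in> {v\<in>V. \<sigma> v \<inter> X \<noteq> {} \<and> (\<exists>e\<in>E. v \<in> e)}" using assms by blast
  then show ?thesis unfolding color_region_def by (rule UnI2[OF imageI])
qed

lemma color_region_cases:
  assumes "x \<in> color_region \<sigma> X F"
  obtains (face) f where "f \<in> F" "x \<in> f"
    | (edge) e w t where "e \<in> E" "w \<in> e" "\<sigma> w \<inter> X \<noteq> {}" "0 < t" "t < 1" "x = \<gamma> e t"
    | (vertex) v e where "v \<in> V" "\<sigma> v \<inter> X \<noteq> {}" "e \<in> E" "v \<in> e" "x = pos v"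
proof -
  consider "x \<in> \<Union>F" | "x \<in> (\<Union>e\<in>{e\<in>E. \<exists>w\<in>e. \<sigma> w \<inter> X \<noteq> {}}. \<gamma> e ` {0<..<1})"
    | "x \<in> pos ` {v\<in>V. \<sigma> v \<inter> X \<noteq> {} \<and> (\<exists>e\<in>E. v \<in> e)}"
    using assms unfolding color_region_def by blast
  then show thesis
  proof cases
    case 2
    then obtain e w t where "e \<in> E" "w \<in> e" "\<sigma> w \<inter> X \<noteq> {}" "t \<in> {0<..<1}" "x = \<gamma> e t"
      by blast
    then show thesis using that(2)[of e w t] by simp
  qed (use that in blast)+
qed

lemma ball_subset_color_region:
  assumes "x \<in> \<Gamma>" "r > 0" "ball x r \<inter> \<Gamma> \<subseteq> Z" "Z \<subseteq> color_region \<sigma> X F"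
    and F: "\<And>f q. f \<in> faces V E pos \<gamma> \<Longrightarrow> q \<in> Z \<Longrightarrow> q \<in> closure f \<Longrightarrow> f \<in> F"
  shows "ball x r \<subseteq> color_region \<sigma> X F"
proof
  fix z assume z: "z \<in> ball x r"
  show "z \<in> color_region \<sigma> X F"
  proof (cases "z \<in> \<Gamma>")
    case True
    then show ?thesis using z assms(3,4) by blast
  next
    case False
    then obtain f where f: "f \<in> faces V E pos \<gamma>" "z \<in> f" by (rule face_of_point)
    obtain q where "q \<in> ball x r" "q \<in> \<Gamma>" "q \<in> closure f"
      using ball_meets_closure_face[OF f z assms(1)] assms(2) by (metis centre_in_ball)
    then have "f \<in> F" using F[OF f(1)] assms(3) by blast
    then show ?thesis using f(2) by (rule color_region_face)
  qed
qed

lemma edge_point_interior_color_region: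
  assumes F: "\<And>f. f \<in> faces V E pos \<gamma> \<Longrightarrow> face_colors E \<gamma> \<sigma> f \<inter> X \<noteq> {} \<Longrightarrow> f \<in> F"
    and e: "e \<in> E" "w \<in> e" "\<sigma> w \<inter> X \<noteq> {}" and t: "0 < t" "t < 1"
  obtains r where "r > 0" "ball (\<gamma> e t) r \<subseteq> color_region \<sigma> X F"
proof -
  obtain r where r: "r > 0" "ball (\<gamma> e t) r \<inter> \<Gamma> \<subseteq> \<gamma> e ` {0<..<1}"
    by (rule drawing_near_edge_point[OF e(1) t])
  have "ball (\<gamma> e t) r \<subseteq> color_region \<sigma> X F"
  proof (rule ball_subset_color_region[OF _ r(1,2)])
    show "\<gamma> e t \<in> \<Gamma>" using edge_point_in_drawing[OF e(1)] t by simp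
    show "\<gamma> e ` {0<..<1} \<subseteq> color_region \<sigma> X F"
      using color_region_edge[where \<sigma>=\<sigma> and X=X and F=F, OF e] by auto
    fix f q assume "f \<in> faces V E pos \<gamma>" "q \<in> \<gamma> e ` {0<..<1}" "q \<in> closure f"
    then have "e \<in> boundary_edges E \<gamma> f" using boundary_edgeI e(1) by auto
    then show "f \<in> F"
      using F[OF \<open>f \<in> faces V E pos \<gamma>\<close>] face_colors_boundary_edge e(2,3) by blast
  qed
  with r(1) show ?thesis by (rule that)
qed

lemma vertex_interior_color_region:
  assumes F: "\<And>f. f \<in> faces V E pos \<gamma> \<Longrightarrow> face_colors E \<gamma> \<sigma> f \<inter> X \<noteq> {} \<Longrightarrow> f \<in> F"
    and v: "v \<in> V" "\<sigma> v \<inter> X \<noteq> {}" "e0 \<in> E" "v \<in> e0"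
  obtains r where "r > 0" "ball (pos v) r \<subseteq> color_region \<sigma> X F"
proof -
  obtain r where r: "r > 0"
    "ball (pos v) r \<inter> \<Gamma> \<subseteq> insert (pos v) (\<Union>e\<in>{e\<in>E. v \<in> e}. \<gamma> e ` {0<..<1})"
    by (rule drawing_near_vertex[OF v(1)])
  have "ball (pos v) r \<subseteq> color_region \<sigma> X F"
  proof (rule ball_subset_color_region[OF _ r(1,2)])
    show "pos v \<in> \<Gamma>" using vertex_in_drawing v(1) by simp
    show "insert (pos v) (\<Union>e\<in>{e\<in>E. v \<in> e}. \<gamma> e ` {0<..<1}) \<subseteq> color_region \<sigma> X F"
      using color_region_vertex[where \<sigma>=\<sigma> and X=X and F=F, OF v]
        color_region_edge[where \<sigma>=\<sigma> and X=X and F=F, OF _ _ v(2)] by auto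
    fix f q assume f: "f \<in> faces V E pos \<gamma>"
      and q: "q \<in> insert (pos v) (\<Union>e\<in>{e\<in>E. v \<in> e}. \<gamma> e ` {0<..<1})" "q \<in> closure f"
    have "\<exists>e\<in>E. v \<in> e \<and> e \<in> boundary_edges E \<gamma> f"
    proof (cases "q = pos v")
      case True
      then show ?thesis using boundary_edge_at_vertex[OF f v(1,3,4)] q(2) by simp
    next
      case False
      then obtain e a where "e \<in> E" "v \<in> e" "0 < a" "a < 1" "q = \<gamma> e a" using q(1) by auto
      then show ?thesis using boundary_edgeI[OF f] q(2) by blast
    qed
    then show "f \<in> F" using F[OF f] face_colors_boundary_edge v(2) by blast
  qed
  with r(1) show ?thesis by (rule that)
qed

lemma open_color_region:
  assumes "F \<subseteq> faces V E pos \<gamma>"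
    and F: "\<And>f. f \<in> faces V E pos \<gamma> \<Longrightarrow> face_colors E \<gamma> \<sigma> f \<inter> X \<noteq> {} \<Longrightarrow> f \<in> F"
  shows "open (color_region \<sigma> X F)"
  unfolding open_contains_ball
proof
  fix x assume "x \<in> color_region \<sigma> X F"
  then show "\<exists>r>0. ball x r \<subseteq> color_region \<sigma> X F"
  proof (cases rule: color_region_cases)
    case (face f)
    have "open f" using open_face assms(1) face(1) by blast
    then obtain r where "r > 0" "ball x r \<subseteq> f"
      using open_contains_ball face(2) by blast
    then show ?thesis using color_region_face[OF face(1)] by blast
  next
    case (edge e w t)
    then show ?thesis using edge_point_interior_color_region[OF F] by metis
  next
    case (vertex v e0)
    then show ?thesis using vertex_interior_color_region[OF F] by metis
  qed
qed

lemma vertex_not_in_color_region: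
  assumes "F \<subseteq> faces V E pos \<gamma>" "v \<in> V" "\<sigma> v \<inter> X = {}"
  shows "pos v \<notin> color_region \<sigma> X F"
proof
  assume "pos v \<in> color_region \<sigma> X F"
  then show False
  proof (cases rule: color_region_cases)
    case (face f)
    then show False using assms(1,2) vertex_in_drawing face_disjoint_drawing by blast
  next
    case (edge e w t)
    then show False using edge_interior_not_vertex assms(2) by (metis image_eqI)
  next
    case (vertex u e)
    then show False using inj_pos assms(2,3) by (auto simp: inj_on_def)
  qed
qed

lemma edge_image_disjoint_color_region:
  assumes "F \<subseteq> faces V E pos \<gamma>" "e \<in> E" "\<forall>w\<in>e. \<sigma> w \<inter> X = {}"
  shows "path_image (\<gamma> e) \<inter> color_region \<sigma> X F = {}"
proof -
  have "x \<notin> color_region \<sigma> X F" if x: "x \<in> path_image (\<gamma> e)" for x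
  proof
    assume "x \<in> color_region \<sigma> X F"
    then show False
    proof (cases rule: color_region_cases)
      case (face f)
      then show False
        using x assms(1,2) edge_image_subset_drawing face_disjoint_drawing by blast
    next
      case (edge e' w t)
      then have "e' \<noteq> e" using assms(3) by blast
      then show False using edge_interior_not_in_other_edge edge assms(2) x by blast
    next
      case (vertex v e')
      then have "v \<in> e" using pos_in_edge_image_iff[OF assms(2)] x by blast
      then show False using vertex(2) assms(3) by blast
    qed
  qed
  then show ?thesis by blast
qed

lemma color_region_avoided_by_path:
  assumes "F \<subseteq> faces V E pos \<gamma>" and "conn_in E (V - verts_of_colors V \<sigma> X) s t"
  shows "connected_component (-color_region \<sigma> X F) (pos s) (pos t)"
proof -
  define A where "A = V - verts_of_colors V \<sigma> X"
  have "s \<in> A" and "(s, t) \<in> {(x, y). {x, y} \<in> E \<and> x \<in> A \<and> y \<in> A}\<^sup>*"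
    using assms(2) unfolding conn_in_def A_def by auto
  from this(2) show ?thesis
  proof (induction rule: rtrancl_induct)
    case base
    show ?case
      using vertex_not_in_color_region[OF assms(1)] \<open>s \<in> A\<close> unfolding A_def verts_of_colors_def
      by auto
  next
    case (step y z)
    then have yz: "{y, z} \<in> E" "\<forall>w\<in>{y, z}. \<sigma> w \<inter> X = {}"
      unfolding A_def verts_of_colors_def by auto
    have "connected (path_image (\<gamma> {y, z}))"
      using arc_edge[OF yz(1)] arc_imp_path connected_path_image by blast
    moreover have "path_image (\<gamma> {y, z}) \<subseteq> -color_region \<sigma> X F"
      using edge_image_disjoint_color_region[OF assms(1) yz] by blast
    moreover have "pos y \<in> path_image (\<gamma> {y, z})" "pos z \<in> path_image (\<gamma> {y, z})"
      using edge_image_Int_vertices[OF yz(1)] by auto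
    ultimately have "connected_component (-color_region \<sigma> X F) (pos y) (pos z)"
      unfolding connected_component_def by blast
    then show ?case using step.IH connected_component_trans by blast
  qed
qed

lemma color_regions_disjoint:
  assumes "F1 \<subseteq> faces V E pos \<gamma>" "F2 \<subseteq> faces V E pos \<gamma>" "F1 \<inter> F2 = {}"
    and no_edge: "\<And>e w w'. e \<in> E \<Longrightarrow> w \<in> e \<Longrightarrow> w' \<in> e \<Longrightarrow> \<sigma> w \<inter> A \<noteq> {} \<Longrightarrow> \<sigma> w' \<inter> B \<noteq> {} \<Longrightarrow> False"
  shows "color_region \<sigma> A F1 \<inter> color_region \<sigma> B F2 = {}"
proof -
  have "x \<notin> color_region \<sigma> B F2" if x: "x \<in> color_region \<sigma> A F1" for x
  proof
    assume xB: "x \<in> color_region \<sigma> B F2"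
    show False
    proof (cases "x \<in> \<Gamma>")
      case False
      then obtain f1 f2 where "f1 \<in> F1" "f2 \<in> F2" "x \<in> f1" "x \<in> f2"
        using x xB vertex_in_drawing edge_point_in_drawing
        by (elim color_region_cases) auto
      then show False using assms(1-3) faces_disjoint by blast
    next
      case True
      then have not_face: "x \<notin> \<Union>F1" "x \<notin> \<Union>F2"
        using assms(1,2) face_disjoint_drawing by blast+
      from x show False
      proof (cases rule: color_region_cases)
        case (edge e w t)
        from xB show False
        proof (cases rule: color_region_cases)
          case (edge e' w' t')
          then have "e = e'"
            using \<open>x = \<gamma> e t\<close> edge_interior_not_in_other_edge[of e e' t] \<open>0 < t\<close> \<open>t < 1\<close> \<open>e \<in> E\<close>
            by (auto simp: path_image_def)
          then show False using no_edge edge \<open>e \<in> E\<close> \<open>w \<in> e\<close> \<open>\<sigma> w \<inter> A \<noteq> {}\<close> by blast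
        next
          case (vertex v e')
          then show False using edge_interior_not_vertex edge by (metis image_eqI)
        qed (use not_face in blast)
      next
        case (vertex v e)
        from xB show False
        proof (cases rule: color_region_cases)
          case (edge e' w' t')
          then show False using edge_interior_not_vertex vertex by (metis image_eqI)
        next
          case vertex': (vertex v' e')
          then have "v' = v" using inj_pos vertex by (auto simp: inj_on_def)
          then show False using no_edge vertex vertex' by blast
        qed (use not_face in blast)
      qed (use not_face in blast)
    qed
  qed
  then show ?thesis by blast
qed

definition subdrawing :: "'v set \<Rightarrow> complex set" where
  "subdrawing W = pos ` W \<union> (\<Union>e\<in>{e\<in>E. e \<subseteq> W}. path_image (\<gamma> e))"

lemma closed_subdrawing: "W \<subseteq> V \<Longrightarrow> closed (subdrawing W)"
  unfolding subdrawing_def by (rule closed_vertices_edges) auto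

lemma subdrawings_disjoint:
  assumes "W \<subseteq> V" "W' \<subseteq> V" "W \<inter> W' = {}"
  shows "subdrawing W \<inter> subdrawing W' = {}"
proof -
  have "pos ` W \<inter> pos ` W' = {}"
    using inj_on_image_Int[OF inj_pos assms(1,2)] assms(3) by simp
  moreover have "pos w \<notin> path_image (\<gamma> e)" if "w \<in> V" "e \<in> E" "w \<notin> e" for w e
    using pos_in_edge_image_iff that by blast
  moreover have "path_image (\<gamma> e) \<inter> path_image (\<gamma> e') = {}"
    if "e \<in> E" "e' \<in> E" "e \<subseteq> W" "e' \<subseteq> W'" for e e'
  proof -
    have "e \<inter> e' = {}" using that(3,4) assms(3) by blast
    moreover have "e \<noteq> {}" using that(1) by (rule edgeE) auto
    ultimately show ?thesis using edge_images_Int[OF that(1,2)] by auto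
  qed
  ultimately show ?thesis
    using assms unfolding subdrawing_def by blast
qed

lemma drawing_subset_subdrawings:
  assumes "R \<subseteq> V" and closed_R: "\<And>u w. {u, w} \<in> E \<Longrightarrow> u \<in> R \<Longrightarrow> w \<notin> N \<Longrightarrow> w \<in> R"
  shows "\<Gamma> \<subseteq> subdrawing R \<union> subdrawing (V - R) \<union> (\<Union>e\<in>{e\<in>E. e \<inter> N \<noteq> {}}. \<gamma> e ` {0<..<1})"
proof
  fix x assume "x \<in> \<Gamma>"
  then show "x \<in> subdrawing R \<union> subdrawing (V - R) \<union> (\<Union>e\<in>{e\<in>E. e \<inter> N \<noteq> {}}. \<gamma> e ` {0<..<1})"
  proof (cases rule: drawing_edge_cases)
    case (vertex v)
    then have "x \<in> pos ` R \<or> x \<in> pos ` (V - R)" by blast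
    then show ?thesis unfolding subdrawing_def by blast
  next
    case (edge e t)
    have x_image: "x \<in> path_image (\<gamma> e)" using edge by (auto simp: path_image_def)
    have "x \<in> subdrawing W" if "e \<subseteq> W" for W
      using edge(1) x_image that unfolding subdrawing_def by blast
    moreover have "e \<subseteq> R \<or> e \<subseteq> V - R" if "e \<inter> N = {}"
    proof -
      obtain u w where uw: "u \<in> V" "w \<in> V" "e = {u, w}" by (rule edgeE[OF edge(1)])
      then have "{u, w} \<in> E" "{w, u} \<in> E" "u \<notin> N" "w \<notin> N"
        using edge(1) that by (auto simp: insert_commute)
      then have "u \<in> R \<longleftrightarrow> w \<in> R" using closed_R by blast
      then show ?thesis using uw by auto
    qed
    moreover have "x \<in> (\<Union>e\<in>{e\<in>E. e \<inter> N \<noteq> {}}. \<gamma> e ` {0<..<1})" if "e \<inter> N \<noteq> {}"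
      using edge that by auto
    ultimately show ?thesis by (cases "e \<inter> N = {}") auto
  qed
qed

lemma color_regions_open_disjoint:
  assumes no_common_face: "\<And>f. f \<in> faces V E pos \<gamma> \<Longrightarrow>
      face_colors E \<gamma> \<sigma> f \<inter> A \<noteq> {} \<Longrightarrow> face_colors E \<gamma> \<sigma> f \<inter> B = {}"
    and FA_def: "FA = {f \<in> faces V E pos \<gamma>. face_colors E \<gamma> \<sigma> f \<inter> A \<noteq> {}}"
  shows "open (color_region \<sigma> A FA)" "open (color_region \<sigma> B (faces V E pos \<gamma> - FA))"
    "color_region \<sigma> A FA \<inter> color_region \<sigma> B (faces V E pos \<gamma> - FA) = {}"
proof -
  show "open (color_region \<sigma> A FA)" by (rule open_color_region) (auto simp: FA_def)
  show "open (color_region \<sigma> B (faces V E pos \<gamma> - FA))"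
    by (rule open_color_region) (use no_common_face in \<open>auto simp: FA_def\<close>)
  show "color_region \<sigma> A FA \<inter> color_region \<sigma> B (faces V E pos \<gamma> - FA) = {}"
  proof (rule color_regions_disjoint)
    fix e w w' assume "e \<in> E" "w \<in> e" "w' \<in> e" "\<sigma> w \<inter> A \<noteq> {}" "\<sigma> w' \<inter> B \<noteq> {}"
    then show False
      by (rule edge_colors_seen_by_face[where \<sigma>=\<sigma> and A=A and B=B])
        (use no_common_face in blast)
  qed (auto simp: FA_def)
qed

lemma complement_color_regions_subset:
  assumes "R \<subseteq> V"
    and R_closed: "\<And>u w. {u, w} \<in> E \<Longrightarrow> u \<in> R \<Longrightarrow> w \<notin> verts_of_colors V \<sigma> (A \<union> B) \<Longrightarrow> w \<in> R"
  shows "-(color_region \<sigma> A F \<union> color_region \<sigma> B (faces V E pos \<gamma> - F))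
    \<subseteq> subdrawing R \<union> subdrawing (V - R)"
proof
  define N where "N = verts_of_colors V \<sigma> (A \<union> B)"
  fix x assume "x \<in> -(color_region \<sigma> A F \<union> color_region \<sigma> B (faces V E pos \<gamma> - F))"
  then have x: "x \<notin> color_region \<sigma> A F" "x \<notin> color_region \<sigma> B (faces V E pos \<gamma> - F)"
    by blast+
  have "x \<in> \<Gamma>"
  proof (rule ccontr)
    assume "x \<notin> \<Gamma>"
    then obtain f where f: "f \<in> faces V E pos \<gamma>" "x \<in> f" by (rule face_of_point)
    show False
    proof (cases "f \<in> F")
      case True
      then show False using x(1) f(2) color_region_face by blast
    next
      case False
      then show False using x(2) f color_region_face by blast
    qed
  qed
  moreover have "\<Gamma> \<subseteq> subdrawing R \<union> subdrawing (V - R) \<union> (\<Union>e\<in>{e\<in>E. e \<inter> N \<noteq> {}}. \<gamma> e ` {0<..<1})"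
    by (rule drawing_subset_subdrawings) (use \<open>R \<subseteq> V\<close> R_closed in \<open>auto simp: N_def\<close>)
  moreover have "x \<notin> (\<Union>e\<in>{e\<in>E. e \<inter> N \<noteq> {}}. \<gamma> e ` {0<..<1})"
  proof
    assume "x \<in> (\<Union>e\<in>{e\<in>E. e \<inter> N \<noteq> {}}. \<gamma> e ` {0<..<1})"
    then obtain e where e: "e \<in> E" "e \<inter> N \<noteq> {}" "x \<in> \<gamma> e ` {0<..<1}" by blast
    then obtain t where t: "0 < t" "t < 1" "x = \<gamma> e t"
      using greaterThanLessThan_iff by blast
    from e(2) obtain w where "w \<in> e" "\<sigma> w \<inter> A \<noteq> {} \<or> \<sigma> w \<inter> B \<noteq> {}"
      unfolding N_def verts_of_colors_def by blast
    then show False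
      using x color_region_edge[of e w \<sigma> A t F] color_region_edge[of e w \<sigma> B t "faces V E pos \<gamma> - F"]
        e(1) t by blast
  qed
  ultimately show "x \<in> subdrawing R \<union> subdrawing (V - R)" by blast
qed

lemma union_of_nonseparating_colors:
  assumes no_common_face: "\<And>f. f \<in> faces V E pos \<gamma> \<Longrightarrow>
      face_colors E \<gamma> \<sigma> f \<inter> A \<noteq> {} \<Longrightarrow> face_colors E \<gamma> \<sigma> f \<inter> B = {}"
    and conn_A: "conn_in E (V - verts_of_colors V \<sigma> A) s t"
    and conn_B: "conn_in E (V - verts_of_colors V \<sigma> B) s t"
  shows "conn_in E (V - verts_of_colors V \<sigma> (A \<union> B)) s t"
proof (rule ccontr)
  assume separated: "\<not> ?thesis"
  define FA where "FA = {f \<in> faces V E pos \<gamma>. face_colors E \<gamma> \<sigma> f \<inter> A \<noteq> {}}"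
  define OA where "OA = color_region \<sigma> A FA"
  define OB where "OB = color_region \<sigma> B (faces V E pos \<gamma> - FA)"
  note regions = color_regions_open_disjoint[OF no_common_face FA_def, folded OA_def OB_def]
  define N where "N = verts_of_colors V \<sigma> (A \<union> B)"
  define R where "R = {v. conn_in E (V - N) s v}"
  have "R \<subseteq> V" unfolding R_def conn_in_def by auto
  have "s \<in> V - verts_of_colors V \<sigma> A" "s \<in> V - verts_of_colors V \<sigma> B" "t \<in> V"
    using conn_A conn_B unfolding conn_in_def by blast+
  then have "s \<in> V - N" unfolding N_def verts_of_colors_def by blast
  then have "s \<in> R" unfolding R_def conn_in_def by simp
  have "t \<notin> R" using separated unfolding R_def N_def by blast
  have R_closed: "w \<in> R" if "{u, w} \<in> E" "u \<in> R" "w \<notin> N" for u w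
  proof -
    have "w \<in> V - N" using edge_subset_V[OF that(1)] that(3) by blast
    then show ?thesis using conn_in_step[of E "V - N" s u w] that(1,2) unfolding R_def by blast
  qed
  define K where "K = subdrawing R"
  define L where "L = subdrawing (V - R)"
  have "closed K" "closed L" "K \<inter> L = {}"
    using closed_subdrawing subdrawings_disjoint \<open>R \<subseteq> V\<close> unfolding K_def L_def by auto
  moreover have "-(OA \<union> OB) \<subseteq> K \<union> L"
    unfolding OA_def OB_def K_def L_def
    by (rule complement_color_regions_subset[OF \<open>R \<subseteq> V\<close>]) (use R_closed N_def in blast)
  moreover have "connected_component (-OA) (pos s) (pos t)"
    unfolding OA_def by (rule color_region_avoided_by_path[OF _ conn_A]) (auto simp: FA_def)
  moreover have "connected_component (-OB) (pos s) (pos t)"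
    unfolding OB_def by (rule color_region_avoided_by_path[OF _ conn_B]) auto
  moreover have "pos s \<in> K" using \<open>s \<in> R\<close> unfolding K_def subdrawing_def by blast
  ultimately have "pos t \<in> K"
    using separation_by_Un_open_partition[OF regions] by blast
  moreover have "pos t \<in> L" using \<open>t \<notin> R\<close> \<open>t \<in> V\<close> unfolding L_def subdrawing_def by blast
  ultimately show False using \<open>K \<inter> L = {}\<close> by blast
qed

end

lemma cig_not_connected_split:
  assumes "\<not> cig_induces_connected V E m pos \<gamma> \<sigma> S" "S \<subseteq> {1..m}"
  obtains A B where "A \<subset> S" "B \<subset> S" "A \<union> B = S"
    "\<And>f. f \<in> faces V E pos \<gamma> \<Longrightarrow> face_colors E \<gamma> \<sigma> f \<inter> A \<noteq> {} \<Longrightarrow> face_colors E \<gamma> \<sigma> f \<inter> B = {}"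
proof -
  define Rel where "Rel = {(a, b). cig_edge V E m pos \<gamma> \<sigma> a b \<and> a \<in> S \<and> b \<in> S}"
  obtain i j where ij: "i \<in> S" "j \<in> S" "(i, j) \<notin> Rel\<^sup>*"
    using assms(1) unfolding cig_induces_connected_def Rel_def by blast
  define A where "A = {k \<in> S. (i, k) \<in> Rel\<^sup>*}"
  have "i \<in> A" "j \<notin> A" "A \<subseteq> S" using ij unfolding A_def by auto
  then have "A \<subset> S" "S - A \<subset> S" "A \<union> (S - A) = S" using ij(1,2) by blast+
  moreover have "face_colors E \<gamma> \<sigma> f \<inter> (S - A) = {}"
    if f: "f \<in> faces V E pos \<gamma>" "face_colors E \<gamma> \<sigma> f \<inter> A \<noteq> {}" for f
  proof (rule ccontr)
    assume "face_colors E \<gamma> \<sigma> f \<inter> (S - A) \<noteq> {}"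
    then obtain k l where kl: "k \<in> face_colors E \<gamma> \<sigma> f" "k \<in> A" "l \<in> face_colors E \<gamma> \<sigma> f" "l \<in> S - A"
      using f(2) by blast
    have "(i, k) \<in> Rel\<^sup>*" using kl(2) unfolding A_def by blast
    moreover have "(k, l) \<in> Rel"
      using kl f(1) assms(2) \<open>A \<subseteq> S\<close> unfolding Rel_def cig_edge_def by blast
    ultimately have "(i, l) \<in> Rel\<^sup>*" by (rule rtrancl_into_rtrancl)
    then show False using kl(4) unfolding A_def by blast
  qed
  ultimately show ?thesis by (rule that)
qed

theorem lemma4p6:
  fixes V :: "'v set" and E :: "'v set set" and m :: nat and \<sigma> :: "'v \<Rightarrow> nat set"
    and pos :: "'v \<Rightarrow> complex" and \<gamma> :: "'v set \<Rightarrow> real \<Rightarrow> complex"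
    and s t :: 'v and S :: "nat set"
  assumes "simple_graph V E"
    and "coloring V m \<sigma>"
    and "plane_embedding V E pos \<gamma>"
    and "color_connected V E m \<sigma>"
    and "s \<in> V" and "t \<in> V" and "conn_in E V s t"
    and "minimal_color_separator V E m \<sigma> s t S"
  shows "cig_induces_connected V E m pos \<gamma> \<sigma> S"
proof (rule ccontr)
  assume "\<not> cig_induces_connected V E m pos \<gamma> \<sigma> S"
  interpret plane_graph V E pos \<gamma> using assms(1,3) by unfold_locales
  have S: "S \<subseteq> {1..m}" "\<not> conn_in E (V - verts_of_colors V \<sigma> S) s t"
    and minimal: "\<And>S'. S' \<subset> S \<Longrightarrow> \<not> color_separator V E m \<sigma> s t S'"
    using assms(8) unfolding minimal_color_separator_def color_separator_def by auto
  obtain A B where AB: "A \<subset> S" "B \<subset> S" "A \<union> B = S"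
    and no_common_face: "\<And>f. f \<in> faces V E pos \<gamma> \<Longrightarrow>
      face_colors E \<gamma> \<sigma> f \<inter> A \<noteq> {} \<Longrightarrow> face_colors E \<gamma> \<sigma> f \<inter> B = {}"
    using cig_not_connected_split[OF \<open>\<not> cig_induces_connected V E m pos \<gamma> \<sigma> S\<close> S(1)] by blast
  have "conn_in E (V - verts_of_colors V \<sigma> A) s t" "conn_in E (V - verts_of_colors V \<sigma> B) s t"
    using minimal AB(1,2) S(1) unfolding color_separator_def by blast+
  then have "conn_in E (V - verts_of_colors V \<sigma> (A \<union> B)) s t"
    by (rule union_of_nonseparating_colors[rotated]) (use no_common_face in blast)
  then show False using S(2) AB(3) by simp
qed

end
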